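(* Let $f:\mathbb{R}\to\mathbb{R}$, $f(x):=\exp(x^3-2x^2)-1$. Then $f$ has two distinct fixed points $p_1,p_2$ such that for each $i\in\{1,2\}$ there exist constants $\epsilon_i>0$, $c_i>0$ and $K_i\in[0,1)$ with the following property: for every initial point $x^{(0)}\in[p_i-\epsilon_i,p_i+\epsilon_i]$, the fixed-point iteration $x^{(t)}=f(x^{(t-1)})$ ($t\ge1$) converges to $p_i$, and for every $t\ge 2$, $$|x^{(t)}-p_i|\le K_i^t\cdot c_i\epsilon_i .$$
   Context: A fixed point of $f$ is a point $p$ with $f(p)=p$. *)

theory Defs
  imports Complex_Main
begin

definition fC :: "real \<Rightarrow> real" where
  "fC x = exp (x ^ 3 - 2 * x ^ 2) - 1"

end

theory Submission
  imports Defs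
begin

text \<open>A fixed point \<open>p\<close> with \<open>\<bar>f' p\<bar> < 1\<close> and \<open>f'\<close> continuous at \<open>p\<close> is attracting:
  on a small interval around \<open>p\<close> the derivative stays below some \<open>K < 1\<close>, so by the mean value
  theorem \<open>f\<close> contracts distances to \<open>p\<close> by the factor \<open>K\<close> and the iterates converge
  geometrically. For \<open>fC\<close> this applies at \<open>0\<close>, where \<open>fC' 0 = 0\<close>, and at a second fixed point
  in \<open>[-1, -0.87]\<close> found by the intermediate value theorem; there the fixed point equation
  \<open>exp (p\<^sup>3 - 2 p\<^sup>2) = 1 + p\<close> turns the derivative into \<open>(1 + p) (3 p\<^sup>2 - 4 p) \<le> 0.13 \<cdot> 7\<close>.\<close>

lemma abs_diff_le_of_deriv_bound:
  fixes f f' :: "real \<Rightarrow> real"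
  assumes deriv: "\<And>z. z \<in> {a..b} \<Longrightarrow> (f has_real_derivative f' z) (at z)"
    and bound: "\<And>z. z \<in> {a..b} \<Longrightarrow> \<bar>f' z\<bar> \<le> K"
    and "x \<in> {a..b}" "y \<in> {a..b}"
  shows "\<bar>f x - f y\<bar> \<le> K * \<bar>x - y\<bar>"
proof -
  have ordered: "\<bar>f v - f u\<bar> \<le> K * \<bar>v - u\<bar>" if "a \<le> u" "u < v" "v \<le> b" for u v
  proof -
    have "\<And>z. u \<le> z \<Longrightarrow> z \<le> v \<Longrightarrow> (f has_real_derivative f' z) (at z)"
      using deriv that by auto
    then obtain z where z: "u < z" "z < v" "f v - f u = (v - u) * f' z"
      using MVT2[OF \<open>u < v\<close>] by blast
    have "\<bar>f v - f u\<bar> = (v - u) * \<bar>f' z\<bar>"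
      using z by (simp add: abs_mult)
    also have "\<dots> \<le> (v - u) * K"
      using z that by (intro mult_left_mono bound) auto
    finally show ?thesis
      using \<open>u < v\<close> by (simp add: mult.commute)
  qed
  show ?thesis
    using ordered[of x y] ordered[of y x] assms(3,4)
    by (cases x y rule: linorder_cases) (auto simp: abs_minus_commute)
qed

lemma iterates_contract_to_point:
  fixes f :: "real \<Rightarrow> real"
  assumes "0 \<le> K" "K \<le> 1"
    and contract: "\<And>x. x \<in> {p - r..p + r} \<Longrightarrow> \<bar>f x - p\<bar> \<le> K * \<bar>x - p\<bar>"
    and x0: "x0 \<in> {p - r..p + r}"
  shows "\<bar>(f ^^ t) x0 - p\<bar> \<le> K ^ t * \<bar>x0 - p\<bar>"
proof (induction t)
  case 0
  then show ?case by simp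
next
  case (Suc t)
  have "K ^ t * \<bar>x0 - p\<bar> \<le> 1 * r"
    using x0 assms(1,2) by (intro mult_mono power_le_one) auto
  then have "(f ^^ t) x0 \<in> {p - r..p + r}"
    using Suc.IH by auto
  then have "\<bar>f ((f ^^ t) x0) - p\<bar> \<le> K * \<bar>(f ^^ t) x0 - p\<bar>"
    by (rule contract)
  also have "\<dots> \<le> K * (K ^ t * \<bar>x0 - p\<bar>)"
    using Suc.IH \<open>0 \<le> K\<close> by (rule mult_left_mono)
  finally show ?case by simp
qed

lemma LIMSEQ_of_geometric_bound:
  fixes X :: "nat \<Rightarrow> real"
  assumes "0 \<le> K" "K < 1" and bound: "\<And>t. \<bar>X t - p\<bar> \<le> K ^ t * C"
  shows "X \<longlonglongrightarrow> p"
proof -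
  have "(\<lambda>t. K ^ t * C) \<longlonglongrightarrow> 0"
    using assms(1,2) by (intro tendsto_mult_left_zero LIMSEQ_power_zero) auto
  then have "(\<lambda>t. X t - p) \<longlonglongrightarrow> 0"
    by (rule tendsto_0_le[where K = 1])
      (simp_all add: always_eventually order_trans[OF bound abs_ge_self])
  then show ?thesis
    by (simp add: LIM_zero_iff)
qed

lemma attracting_fixed_point:
  fixes f f' :: "real \<Rightarrow> real"
  assumes fixed: "f p = p"
    and deriv: "\<forall>\<^sub>F x in nhds p. (f has_real_derivative f' x) (at x)"
    and cont: "isCont f' p" and slope: "\<bar>f' p\<bar> < 1"
  shows "\<exists>eps>0. \<exists>K. 0 \<le> K \<and> K < 1 \<and> (\<forall>x0 \<in> {p - eps..p + eps}.
           (\<lambda>t. (f ^^ t) x0) \<longlonglongrightarrow> p \<and> (\<forall>t. \<bar>(f ^^ t) x0 - p\<bar> \<le> K ^ t * eps))"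
proof -
  define K where "K = (1 + \<bar>f' p\<bar>) / 2"
  have K: "0 \<le> K" "K < 1" "\<bar>f' p\<bar> < K"
    using slope by (auto simp: K_def)
  have "((\<lambda>x. \<bar>f' x\<bar>) \<longlongrightarrow> \<bar>f' p\<bar>) (nhds p)"
    using cont by (intro tendsto_rabs) (simp add: isCont_def tendsto_at_iff_tendsto_nhds)
  then have "\<forall>\<^sub>F x in nhds p. \<bar>f' x\<bar> < K"
    using K(3) by (rule order_tendstoD)
  with deriv have "\<forall>\<^sub>F x in nhds p. (f has_real_derivative f' x) (at x) \<and> \<bar>f' x\<bar> < K"
    by (rule eventually_conj)
  then obtain d where "d > 0"
    and near: "\<forall>x. dist x p < d \<longrightarrow> (f has_real_derivative f' x) (at x) \<and> \<bar>f' x\<bar> < K"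
    unfolding eventually_nhds_metric by blast
  define eps where "eps = d / 2"
  have in_ball: "dist x p < d" if "x \<in> {p - eps..p + eps}" for x
    using that \<open>d > 0\<close> by (auto simp: eps_def dist_real_def)
  have near_eps: "(f has_real_derivative f' z) (at z)" "\<bar>f' z\<bar> \<le> K"
    if "z \<in> {p - eps..p + eps}" for z
    using near in_ball[OF that] by auto
  have contract: "\<bar>f x - p\<bar> \<le> K * \<bar>x - p\<bar>" if "x \<in> {p - eps..p + eps}" for x
  proof -
    have "\<bar>f x - f p\<bar> \<le> K * \<bar>x - p\<bar>"
      using that \<open>d > 0\<close>
      by (intro abs_diff_le_of_deriv_bound[where f' = f'] near_eps) (auto simp: eps_def)
    then show ?thesis
      using fixed by simp
  qed
  have "\<forall>x0 \<in> {p - eps..p + eps}.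
          (\<lambda>t. (f ^^ t) x0) \<longlonglongrightarrow> p \<and> (\<forall>t. \<bar>(f ^^ t) x0 - p\<bar> \<le> K ^ t * eps)"
  proof
    fix x0 assume x0: "x0 \<in> {p - eps..p + eps}"
    have geometric: "\<bar>(f ^^ t) x0 - p\<bar> \<le> K ^ t * eps" for t
    proof -
      have "\<bar>(f ^^ t) x0 - p\<bar> \<le> K ^ t * \<bar>x0 - p\<bar>"
        using K contract x0 by (intro iterates_contract_to_point) auto
      also have "\<dots> \<le> K ^ t * eps"
        using K x0 by (intro mult_left_mono) auto
      finally show ?thesis .
    qed
    then show "(\<lambda>t. (f ^^ t) x0) \<longlonglongrightarrow> p \<and> (\<forall>t. \<bar>(f ^^ t) x0 - p\<bar> \<le> K ^ t * eps)"
      using LIMSEQ_of_geometric_bound[OF K(1,2) geometric] by blast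
  qed
  moreover have "eps > 0"
    using \<open>d > 0\<close> by (simp add: eps_def)
  ultimately show ?thesis
    using K by blast
qed

definition fC' :: "real \<Rightarrow> real" where
  "fC' x = exp (x ^ 3 - 2 * x ^ 2) * (3 * x ^ 2 - 4 * x)"

lemma fC_has_real_derivative: "(fC has_real_derivative fC' x) (at x)"
  unfolding fC_def fC'_def
  by (auto intro!: derivative_eq_intros simp: algebra_simps power2_eq_square power3_eq_cube)

lemma isCont_fC': "isCont fC' x"
  unfolding fC'_def by (intro continuous_intros)

lemma fC_attracting_fixed_point:
  assumes "fC p = p" "\<bar>fC' p\<bar> < 1"
  shows "\<exists>eps>0. \<exists>c>0. \<exists>K::real. 0 \<le> K \<and> K < 1 \<and>
           (\<forall>x0 \<in> {p - eps .. p + eps}. (\<lambda>t. (fC ^^ t) x0) \<longlonglongrightarrow> p \<and>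
              (\<forall>t::nat. t \<ge> 2 \<longrightarrow> \<bar>(fC ^^ t) x0 - p\<bar> \<le> K ^ t * c * eps))"
proof -
  obtain eps K where "eps > 0" "0 \<le> K" "K < 1" and K: "\<forall>x0 \<in> {p - eps..p + eps}.
      (\<lambda>t. (fC ^^ t) x0) \<longlonglongrightarrow> p \<and> (\<forall>t. \<bar>(fC ^^ t) x0 - p\<bar> \<le> K ^ t * eps)"
    using attracting_fixed_point[of fC p fC'] assms isCont_fC' fC_has_real_derivative
    by (auto simp: always_eventually)
  then show ?thesis
    by (intro exI[of _ eps] conjI exI[of _ 1] exI[of _ K]) auto
qed

lemma exp_217_100_ge_8: "8 \<le> exp (217 / 100 :: real)"
proof -
  have "(8::real) \<le> (1 + (217 / 100) / 32) ^ 32"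
    by (simp add: power_divide)
  also have "\<dots> \<le> exp (217 / 100)"
    using exp_ge_one_plus_x_over_n_power_n[of 32 "217 / 100"] by simp
  finally show ?thesis .
qed

lemma fC_fixed_point_near_minus_one: "\<exists>p. -1 \<le> p \<and> p \<le> -87/100 \<and> fC p = p"
proof -
  have "exp ((-87/100::real) ^ 3 - 2 * (-87/100) ^ 2) \<le> exp (-217/100)"
    by (simp add: power_divide)
  also have "\<dots> = 1 / exp (217/100)"
    by (simp add: exp_minus')
  also have "\<dots> \<le> 13/100"
    using exp_217_100_ge_8 by (simp add: divide_simps)
  finally have "fC (-87/100) - (-87/100) \<le> 0"
    unfolding fC_def by simp
  moreover have "0 \<le> fC (-1) - (-1)"
    unfolding fC_def by simp
  moreover have "\<forall>x. isCont (\<lambda>x. fC x - x) x"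
    unfolding fC_def by (intro allI continuous_intros)
  ultimately obtain p where "-1 \<le> p" "p \<le> -87/100" "fC p - p = 0"
    using IVT2[of "\<lambda>x. fC x - x" "-87/100" 0 "-1"] by auto
  then show ?thesis by auto
qed

lemma abs_fC'_fixed_point_lt_1:
  assumes fixed: "fC p = p" and "-1 \<le> p" "p \<le> -87/100"
  shows "\<bar>fC' p\<bar> < 1"
proof -
  have "exp (p ^ 3 - 2 * p ^ 2) = 1 + p"
    using fixed by (simp add: fC_def)
  then have fC'_p: "fC' p = (1 + p) * (3 * p ^ 2 - 4 * p)"
    by (simp add: fC'_def)
  have "p ^ 2 \<le> 1"
    using assms(2,3) by (simp add: abs_square_le_1)
  then have "0 \<le> 3 * p ^ 2 - 4 * p" "3 * p ^ 2 - 4 * p \<le> 7"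
    using assms(2,3) zero_le_power2[of p] by linarith+
  moreover have "0 \<le> 1 + p" "1 + p \<le> 13/100"
    using assms(2,3) by auto
  ultimately have "0 \<le> fC' p" "fC' p \<le> 13/100 * 7"
    unfolding fC'_p by (intro mult_nonneg_nonneg mult_mono; simp)+
  then show ?thesis by simp
qed

theorem lemmaC1:
  shows "\<exists>p1 p2 :: real. p1 \<noteq> p2 \<and> fC p1 = p1 \<and> fC p2 = p2 \<and>
    (\<forall>p \<in> {p1, p2}. \<exists>eps>0. \<exists>c>0. \<exists>K::real. 0 \<le> K \<and> K < 1 \<and>
       (\<forall>x0 \<in> {p - eps .. p + eps}.
          (\<lambda>t. (fC ^^ t) x0) \<longlonglongrightarrow> p \<and>
          (\<forall>t::nat. t \<ge> 2 \<longrightarrow> \<bar>(fC ^^ t) x0 - p\<bar> \<le> K ^ t * c * eps)))"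
proof -
  obtain p2 where p2: "-1 \<le> p2" "p2 \<le> -87/100" "fC p2 = p2"
    using fC_fixed_point_near_minus_one by blast
  have fixed_0: "fC 0 = 0"
    by (simp add: fC_def)
  have "\<bar>fC' 0\<bar> < 1"
    by (simp add: fC'_def)
  then show ?thesis
    using p2 fixed_0 fC_attracting_fixed_point[OF fixed_0]
      fC_attracting_fixed_point[OF p2(3) abs_fC'_fixed_point_lt_1[OF p2(3,1,2)]]
    by (intro exI[of _ 0] exI[of _ p2]) auto
qed

end
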